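(* Let $a\in\mathbb{R}$, $\sigma>0$, $\gamma>0$, $\lambda>0$, $T\ge1$, channel transition probabilities $p_{cc'}$, and let $Q_t$ be defined on $\mathbb{R}\times\{0,1\}\times\{0,1\}$ by the value iteration in the context. Then there exists an optimal scheduling policy $\phi^\star$ for the original risk-sensitive MDP of threshold type: for each $t\in\{1,\ldots,T\}$ and $c\in\{0,1\}$ there is a threshold $\Delta^\star_t(c)\in[0,\infty]$ such that $\phi^\star_t(\Delta,c)$ minimizes $Q_t(\Delta,c;\cdot)$ for all $\Delta\in\mathbb{R}$, $\phi^\star_t(\Delta,c)=1$ whenever $|\Delta|>\Delta^\star_t(c)$, and $\phi^\star_t(\Delta,c)=0$ whenever $|\Delta|<\Delta^\star_t(c)$.
   Context: Model: $x(t+1)=ax(t)+w(t)$ with $w(t)$ i.i.d. $\mathcal{N}(0,\sigma^2)$; Gilbert–Elliott channel state $c(t)\in\{0,1\}$ a Markov chain with $p_{01},p_{10}\in[0,1]$, $p_{00}=1-p_{01}$, $p_{11}=1-p_{10}$; error $\Delta(t)=x(t)-a\hat x(t-1)$; cost $d(\Delta,c,u)=\lambda u+(1-uc)\Delta^2$; objective $\min\mathbb{E}\exp(\gamma\sum_{t=0}^T d(\Delta(t),c(t),u(t)))$. With $\psi(v)=e^{-v^2/(2\sigma^2)}$, value iteration: $V_0\equiv1$, $Q_{t+1}(\Delta,c;0)=e^{\gamma\Delta^2}\sum_{c_+\in\{0,1\}}p_{cc_+}\int_{\mathbb{R}}\psi(\Delta_+-a\Delta)V_t(\Delta_+,c_+)d\Delta_+$,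 $Q_{t+1}(\Delta,c;1)=(1-c)e^{\gamma(\lambda+\Delta^2)}\sum_{c_+}p_{cc_+}\int_{\mathbb{R}}\psi(\Delta_+-a\Delta)V_t(\Delta_+,c_+)d\Delta_++c\,e^{\gamma\lambda}\sum_{c_+}p_{cc_+}\int_{\mathbb{R}}\psi(\Delta_+)V_t(\Delta_+,c_+)d\Delta_+$, $V_{t+1}=\min_{u\in\{0,1\}}Q_{t+1}(\cdot,\cdot;u)$. A deterministic Markov policy choosing at stage $t$ a minimizer of $Q_t(\Delta,c;\cdot)$ is optimal. A policy is of threshold type if it transmits ($u=1$) only when $|\Delta|$ exceeds a threshold depending on $t$ and the channel state. *)

theory Defs
  imports "HOL-Analysis.Analysis"
begin

definition psi :: "real \<Rightarrow> real \<Rightarrow> real" where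
  "psi \<sigma> v = exp (- (v ^ 2) / (2 * \<sigma> ^ 2))"

definition GE_P :: "real \<Rightarrow> real \<Rightarrow> nat \<Rightarrow> nat \<Rightarrow> real" where
  "GE_P p01 p10 c c' =
     (if c = 0 then (if c' = 0 then 1 - p01 else p01)
      else (if c' = 0 then p10 else 1 - p10))"

definition cont_term ::
  "real \<Rightarrow> real \<Rightarrow> real \<Rightarrow> (real \<Rightarrow> nat \<Rightarrow> ennreal) \<Rightarrow> nat \<Rightarrow> real \<Rightarrow> ennreal" where
  "cont_term \<sigma> p01 p10 W c m =
     (\<Sum>c'\<in>{0::nat,1}. ennreal (GE_P p01 p10 c c') *
        (\<integral>\<^sup>+ x. ennreal (psi \<sigma> (x - m)) * W x c' \<partial>lborel))"

definition Qstep ::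
  "real \<Rightarrow> real \<Rightarrow> real \<Rightarrow> real \<Rightarrow> real \<Rightarrow> real \<Rightarrow>
   (real \<Rightarrow> nat \<Rightarrow> ennreal) \<Rightarrow> real \<Rightarrow> nat \<Rightarrow> nat \<Rightarrow> ennreal" where
  "Qstep a \<sigma> \<gamma> lam p01 p10 W \<Delta> c u =
     (if u = 0 then
        ennreal (exp (\<gamma> * \<Delta> ^ 2)) * cont_term \<sigma> p01 p10 W c (a * \<Delta>)
      else
        ennreal ((1 - real c) * exp (\<gamma> * (lam + \<Delta> ^ 2))) * cont_term \<sigma> p01 p10 W c (a * \<Delta>)
        + ennreal (real c * exp (\<gamma> * lam)) * cont_term \<sigma> p01 p10 W c 0)"

primrec Vfun ::
  "real \<Rightarrow> real \<Rightarrow> real \<Rightarrow> real \<Rightarrow> real \<Rightarrow> real \<Rightarrow> nat \<Rightarrow> real \<Rightarrow> nat \<Rightarrow> ennreal" where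
  "Vfun a \<sigma> \<gamma> lam p01 p10 0 = (\<lambda>\<Delta> c. 1)"
| "Vfun a \<sigma> \<gamma> lam p01 p10 (Suc t) =
     (\<lambda>\<Delta> c. min (Qstep a \<sigma> \<gamma> lam p01 p10 (Vfun a \<sigma> \<gamma> lam p01 p10 t) \<Delta> c 0)
                 (Qstep a \<sigma> \<gamma> lam p01 p10 (Vfun a \<sigma> \<gamma> lam p01 p10 t) \<Delta> c 1))"

text \<open>Q_t for t >= 1: Q_{t}(Delta,c;u) = Qstep built from V_{t-1}.\<close>
definition Qfun ::
  "real \<Rightarrow> real \<Rightarrow> real \<Rightarrow> real \<Rightarrow> real \<Rightarrow> real \<Rightarrow> nat \<Rightarrow> real \<Rightarrow> nat \<Rightarrow> nat \<Rightarrow> ennreal" where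
  "Qfun a \<sigma> \<gamma> lam p01 p10 t = Qstep a \<sigma> \<gamma> lam p01 p10 (Vfun a \<sigma> \<gamma> lam p01 p10 (t - 1))"

end

theory Submission
  imports Defs
begin

text \<open>
  By induction on t, every value function V_t(., c) is even and nondecreasing in the absolute
  value of its argument: the Gaussian kernel is even and decreasing in the absolute value, and
  convolving such a kernel with an even function that is nondecreasing in the absolute value
  gives again such a function (reflect the integration variable across the midpoint of the two
  centres and apply the rearrangement inequality pointwise). Hence Q_t(Delta, c; 0) is
  nondecreasing in |Delta|, whereas in the good channel state Q_t(Delta, 1; 1) does not depend
  on Delta at all, and in the bad state transmitting only multiplies the cost by exp(gamma lambda)
  and never pays off. So for each c the set of errors where staying silent is optimal is a
  symmetric interval around 0, and its radius is the threshold.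
\<close>

definition abs_mono :: "(real \<Rightarrow> 'a::order) \<Rightarrow> bool" where
  "abs_mono w \<longleftrightarrow> (\<forall>x y. \<bar>x\<bar> \<le> \<bar>y\<bar> \<longrightarrow> w x \<le> w y)"

lemma abs_mono_minus: "abs_mono w \<Longrightarrow> w (- x) = w x"
  unfolding abs_mono_def by (metis abs_minus_cancel order_refl antisym)

lemma abs_mono_min:
  fixes v w :: "real \<Rightarrow> 'a::linorder"
  shows "abs_mono v \<Longrightarrow> abs_mono w \<Longrightarrow> abs_mono (\<lambda>x. min (v x) (w x))"
  unfolding abs_mono_def by (blast intro: min.mono)

lemma abs_mono_borel_measurable:
  fixes w :: "real \<Rightarrow> 'a::{linorder_topology, second_countable_topology}"
  assumes "abs_mono w"
  shows "w \<in> borel_measurable borel"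
proof (rule borel_measurableI_less)
  fix y
  have "is_interval {x. w x < y}" unfolding is_interval_1
  proof (intro ballI allI impI)
    fix a b x assume a: "a \<in> {x. w x < y}" and b: "b \<in> {x. w x < y}" and "a \<le> x \<and> x \<le> b"
    then have "\<bar>x\<bar> \<le> \<bar>a\<bar> \<or> \<bar>x\<bar> \<le> \<bar>b\<bar>" by auto
    with assms a b show "x \<in> {x. w x < y}"
      unfolding abs_mono_def by (auto intro: le_less_trans)
  qed
  then show "{x \<in> space borel. w x < y} \<in> sets borel"
    using real_interval_borel_measurable by simp
qed

lemma rearrangement_ineq:
  fixes a b p r :: "'a::{comm_semiring_1, canonically_ordered_monoid_add}"
  assumes "b \<le> a" "r \<le> p"
  shows "b * p + a * r \<le> a * p + b * r"
proof -
  obtain e where e: "a = b + e" using assms(1) le_iff_add by blast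
  obtain f where f: "p = r + f" using assms(2) le_iff_add by blast
  have "a * p + b * r = (b * p + a * r) + e * f"
    unfolding e f by (simp add: distrib_left distrib_right ac_simps)
  then show ?thesis by (metis le_iff_add)
qed

lemma nn_integral_split_reflect:
  fixes f :: "real \<Rightarrow> ennreal"
  assumes [measurable]: "f \<in> borel_measurable borel"
  shows "(\<integral>\<^sup>+x. f x \<partial>lborel) =
    (\<integral>\<^sup>+x. f x * indicator {s/2..} x + f (s - x) * indicator {s/2<..} x \<partial>lborel)"
proof -
  have "(\<integral>\<^sup>+x. f x \<partial>lborel) =
     (\<integral>\<^sup>+x. f x * indicator {s/2..} x + f x * indicator {..<s/2} x \<partial>lborel)"
    by (intro nn_integral_cong) (auto split: split_indicator)
  also have "\<dots> = (\<integral>\<^sup>+x. f x * indicator {s/2..} x \<partial>lborel) +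
      (\<integral>\<^sup>+x. f x * indicator {..<s/2} x \<partial>lborel)"
    by (intro nn_integral_add) auto
  also have "(\<integral>\<^sup>+x. f x * indicator {..<s/2} x \<partial>lborel) =
      ennreal \<bar>-1\<bar> * (\<integral>\<^sup>+x. f (s + (-1) * x) * indicator {..<s/2} (s + (-1) * x) \<partial>lborel)"
    by (intro nn_integral_real_affine) auto
  also have "\<dots> = (\<integral>\<^sup>+x. f (s - x) * indicator {s/2<..} x \<partial>lborel)"
    by (simp, intro nn_integral_cong) (auto split: split_indicator)
  also have "(\<integral>\<^sup>+x. f x * indicator {s/2..} x \<partial>lborel) +
      (\<integral>\<^sup>+x. f (s - x) * indicator {s/2<..} x \<partial>lborel) =
    (\<integral>\<^sup>+x. f x * indicator {s/2..} x + f (s - x) * indicator {s/2<..} x \<partial>lborel)"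
    by (intro nn_integral_add[symmetric]) auto
  finally show ?thesis .
qed

lemma nn_integral_shift_mono_nonneg:
  fixes k w :: "real \<Rightarrow> ennreal"
  assumes k_anti: "\<And>u v. \<bar>u\<bar> \<le> \<bar>v\<bar> \<Longrightarrow> k v \<le> k u"
    and k_meas [measurable]: "k \<in> borel_measurable borel"
    and w: "abs_mono w" and m: "\<bar>m\<bar> \<le> m'"
  shows "(\<integral>\<^sup>+x. k (x - m) * w x \<partial>lborel) \<le> (\<integral>\<^sup>+x. k (x - m') * w x \<partial>lborel)"
proof -
  define s where "s = m + m'"
  have "0 \<le> s" using m by (simp add: s_def)
  have [measurable]: "w \<in> borel_measurable borel" using w by (rule abs_mono_borel_measurable)
  have k_minus: "k (- v) = k v" for v by (rule antisym; rule k_anti) simp_all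
  \<comment> \<open>The reflection x \<mapsto> s - x exchanges the distances of x to the two centres m and m'.\<close>
  have "(\<integral>\<^sup>+x. k (x - m) * w x \<partial>lborel) =
    (\<integral>\<^sup>+x. k (x - m) * w x * indicator {s/2..} x
        + k (s - x - m) * w (s - x) * indicator {s/2<..} x \<partial>lborel)"
    by (rule nn_integral_split_reflect) measurable
  also have "\<dots> \<le> (\<integral>\<^sup>+x. k (x - m') * w x * indicator {s/2..} x
        + k (s - x - m') * w (s - x) * indicator {s/2<..} x \<partial>lborel)"
  proof (rule nn_integral_mono)
    fix x
    consider "x < s/2" | "x = s/2" | "s/2 < x" by linarith
    then show "k (x - m) * w x * indicator {s/2..} x
        + k (s - x - m) * w (s - x) * indicator {s/2<..} x
      \<le> k (x - m') * w x * indicator {s/2..} x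
        + k (s - x - m') * w (s - x) * indicator {s/2<..} x"
    proof cases
      case 1
      then show ?thesis by simp
    next
      case 2
      then have "k (x - m) \<le> k (x - m')" using m by (intro k_anti) (auto simp: s_def)
      with 2 show ?thesis by (simp add: mult_right_mono)
    next
      case 3
      then have "k (x - m) \<le> k (x - m')" using m by (intro k_anti) (auto simp: s_def)
      moreover have "w (s - x) \<le> w x"
        using w 3 \<open>0 \<le> s\<close> unfolding abs_mono_def by auto
      ultimately have "k (x - m) * w x + k (x - m') * w (s - x)
          \<le> k (x - m') * w x + k (x - m) * w (s - x)"
        by (rule rearrangement_ineq)
      moreover have "k (s - x - m) = k (x - m')" "k (s - x - m') = k (x - m)"
        using k_minus[of "x - m'"] k_minus[of "x - m"] by (simp_all add: s_def)
      ultimately show ?thesis using 3 by simp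
    qed
  qed
  also have "\<dots> = (\<integral>\<^sup>+x. k (x - m') * w x \<partial>lborel)"
    by (rule nn_integral_split_reflect[symmetric]) measurable
  finally show ?thesis .
qed

lemma abs_mono_convolution:
  fixes k w :: "real \<Rightarrow> ennreal"
  assumes k_anti: "\<And>u v. \<bar>u\<bar> \<le> \<bar>v\<bar> \<Longrightarrow> k v \<le> k u"
    and k_meas [measurable]: "k \<in> borel_measurable borel"
    and w: "abs_mono w"
  shows "abs_mono (\<lambda>m. \<integral>\<^sup>+x. k (x - m) * w x \<partial>lborel)"
proof -
  have [measurable]: "w \<in> borel_measurable borel" using w by (rule abs_mono_borel_measurable)
  have k_minus: "k (- v) = k v" for v by (rule antisym; rule k_anti) simp_all
  have even: "(\<integral>\<^sup>+x. k (x - m) * w x \<partial>lborel) = (\<integral>\<^sup>+x. k (x - (- m)) * w x \<partial>lborel)" for m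
  proof -
    have "(\<integral>\<^sup>+x. k (x - m) * w x \<partial>lborel) =
      ennreal \<bar>-1\<bar> * (\<integral>\<^sup>+x. k (0 + (-1) * x - m) * w (0 + (-1) * x) \<partial>lborel)"
      by (rule nn_integral_real_affine) auto
    also have "\<dots> = (\<integral>\<^sup>+x. k (x - (- m)) * w x \<partial>lborel)"
      using k_minus[of "x + m" for x] abs_mono_minus[OF w] by (simp add: add.commute)
    finally show ?thesis .
  qed
  show ?thesis unfolding abs_mono_def
  proof (intro allI impI)
    fix m m' :: real assume "\<bar>m\<bar> \<le> \<bar>m'\<bar>"
    then consider "\<bar>m\<bar> \<le> m'" | "\<bar>m\<bar> \<le> - m'" by linarith
    then show "(\<integral>\<^sup>+x. k (x - m) * w x \<partial>lborel) \<le> (\<integral>\<^sup>+x. k (x - m') * w x \<partial>lborel)"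
    proof cases
      case 1
      show ?thesis using nn_integral_shift_mono_nonneg[OF k_anti k_meas w 1] .
    next
      case 2
      show ?thesis
        unfolding even[of m'] using nn_integral_shift_mono_nonneg[OF k_anti k_meas w 2] .
    qed
  qed
qed

lemma psi_abs_antimono: "\<bar>u\<bar> \<le> \<bar>v\<bar> \<Longrightarrow> psi \<sigma> v \<le> psi \<sigma> u"
  unfolding psi_def by (simp add: abs_le_square_iff divide_right_mono)

lemma cont_term_abs_mono:
  assumes "\<And>c. abs_mono (\<lambda>x. W x c)"
  shows "abs_mono (cont_term \<sigma> p01 p10 W c)"
proof -
  have "abs_mono (\<lambda>m. \<integral>\<^sup>+x. ennreal (psi \<sigma> (x - m)) * W x c' \<partial>lborel)" for c'
    using assms by (intro abs_mono_convolution ennreal_leI psi_abs_antimono)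
      (auto simp: psi_def)
  then show ?thesis
    unfolding abs_mono_def cont_term_def by (intro allI impI sum_mono mult_left_mono) (blast, simp)
qed

lemma Qstep_abs_mono:
  assumes "\<And>c. abs_mono (\<lambda>x. W x c)" and "\<gamma> \<ge> 0"
  shows "abs_mono (\<lambda>\<Delta>. Qstep a \<sigma> \<gamma> lam p01 p10 W \<Delta> c u)"
  unfolding abs_mono_def
proof (intro allI impI)
  fix x y :: real assume xy: "\<bar>x\<bar> \<le> \<bar>y\<bar>"
  then have sq: "x\<^sup>2 \<le> y\<^sup>2" by (simp add: abs_le_square_iff)
  have cont: "cont_term \<sigma> p01 p10 W c (a * x) \<le> cont_term \<sigma> p01 p10 W c (a * y)"
    using cont_term_abs_mono[OF assms(1)] xy unfolding abs_mono_def
    by (simp add: abs_mult mult_left_mono)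
  have idle: "exp (\<gamma> * x\<^sup>2) \<le> exp (\<gamma> * y\<^sup>2)"
    using sq assms(2) by (simp add: mult_left_mono)
  have transmit: "ennreal ((1 - real c) * exp (\<gamma> * (lam + x\<^sup>2)))
      \<le> ennreal ((1 - real c) * exp (\<gamma> * (lam + y\<^sup>2)))"
  proof (cases "c = 0")
    case True
    then show ?thesis using sq assms(2) by (simp add: mult_left_mono)
  next
    case False
    then have "(1 - real c) * exp z \<le> 0" for z by (simp add: mult_nonpos_nonneg)
    then show ?thesis by (simp add: ennreal_neg)
  qed
  show "Qstep a \<sigma> \<gamma> lam p01 p10 W x c u \<le> Qstep a \<sigma> \<gamma> lam p01 p10 W y c u"
    unfolding Qstep_def using cont idle transmit by (auto intro!: add_mono mult_mono ennreal_leI)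
qed

lemma Vfun_abs_mono:
  assumes "\<gamma> \<ge> 0"
  shows "abs_mono (\<lambda>\<Delta>. Vfun a \<sigma> \<gamma> lam p01 p10 t \<Delta> c)"
proof (induction t arbitrary: c)
  case 0
  then show ?case by (simp add: abs_mono_def)
next
  case (Suc t)
  then show ?case
    using assms by (simp add: abs_mono_min Qstep_abs_mono)
qed

lemma Qstep_idle_optimal_downward_closed:
  assumes W: "\<And>c. abs_mono (\<lambda>x. W x c)" and "\<gamma> \<ge> 0" "lam \<ge> 0"
    and c: "c \<in> {0, 1}" and xy: "\<bar>x\<bar> \<le> \<bar>y\<bar>"
    and idle_y: "Qstep a \<sigma> \<gamma> lam p01 p10 W y c 0 \<le> Qstep a \<sigma> \<gamma> lam p01 p10 W y c 1"
  shows "Qstep a \<sigma> \<gamma> lam p01 p10 W x c 0 \<le> Qstep a \<sigma> \<gamma> lam p01 p10 W x c 1"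
proof (cases "c = 0")
  case True
  have "exp (\<gamma> * x\<^sup>2) \<le> exp (\<gamma> * (lam + x\<^sup>2))"
    using assms(2,3) by (simp add: algebra_simps)
  then show ?thesis
    using True unfolding Qstep_def by (auto intro!: add_increasing2 mult_right_mono ennreal_leI)
next
  case False
  with c have "c = 1" by simp
  have "Qstep a \<sigma> \<gamma> lam p01 p10 W x c 0 \<le> Qstep a \<sigma> \<gamma> lam p01 p10 W y c 0"
    using Qstep_abs_mono[where W = W, OF W \<open>\<gamma> \<ge> 0\<close>] xy unfolding abs_mono_def by blast
  also note idle_y
  also have "Qstep a \<sigma> \<gamma> lam p01 p10 W y c 1 = Qstep a \<sigma> \<gamma> lam p01 p10 W x c 1"
    using \<open>c = 1\<close> by (simp add: Qstep_def)
  finally show ?thesis .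
qed

definition optimal_threshold_rule :: "(real \<Rightarrow> nat \<Rightarrow> 'a::order) \<Rightarrow> (real \<Rightarrow> nat) \<Rightarrow> ereal \<Rightarrow> bool"
  where "optimal_threshold_rule q \<phi> thr \<longleftrightarrow> 0 \<le> thr \<and>
    (\<forall>\<Delta>. \<phi> \<Delta> \<in> {0, 1} \<and> (\<forall>u\<in>{0, 1}. q \<Delta> (\<phi> \<Delta>) \<le> q \<Delta> u) \<and>
      (ereal \<bar>\<Delta>\<bar> > thr \<longrightarrow> \<phi> \<Delta> = 1) \<and> (ereal \<bar>\<Delta>\<bar> < thr \<longrightarrow> \<phi> \<Delta> = 0))"

definition greedy_action :: "(real \<Rightarrow> nat \<Rightarrow> 'a::linorder) \<Rightarrow> real \<Rightarrow> nat" where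
  "greedy_action q \<Delta> = (if q \<Delta> 0 \<le> q \<Delta> 1 then 0 else 1)"

definition idle_radius :: "(real \<Rightarrow> nat \<Rightarrow> 'a::linorder) \<Rightarrow> ereal" where
  "idle_radius q = max 0 (SUP \<Delta>\<in>{\<Delta>. q \<Delta> 0 \<le> q \<Delta> 1}. ereal \<bar>\<Delta>\<bar>)"

lemma optimal_threshold_rule_greedy:
  fixes q :: "real \<Rightarrow> nat \<Rightarrow> 'a::linorder"
  assumes idle_closed: "\<And>x y. \<bar>x\<bar> \<le> \<bar>y\<bar> \<Longrightarrow> q y 0 \<le> q y 1 \<Longrightarrow> q x 0 \<le> q x 1"
  shows "optimal_threshold_rule q (greedy_action q) (idle_radius q)"
proof -
  define I where "I = {\<Delta>. q \<Delta> 0 \<le> q \<Delta> 1}"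
  have above: "greedy_action q \<Delta> = 1" if "ereal \<bar>\<Delta>\<bar> > idle_radius q" for \<Delta>
  proof -
    have "\<Delta> \<notin> I"
    proof
      assume "\<Delta> \<in> I"
      then have "ereal \<bar>\<Delta>\<bar> \<le> (SUP \<Delta>\<in>I. ereal \<bar>\<Delta>\<bar>)" by (rule SUP_upper)
      also have "\<dots> \<le> idle_radius q" unfolding idle_radius_def I_def by (rule max.cobounded2)
      finally show False using that by simp
    qed
    then show ?thesis by (simp add: greedy_action_def I_def)
  qed
  have below: "greedy_action q \<Delta> = 0" if "ereal \<bar>\<Delta>\<bar> < idle_radius q" for \<Delta>
  proof -
    have "\<not> ereal \<bar>\<Delta>\<bar> < 0" by simp
    with that have "ereal \<bar>\<Delta>\<bar> < (SUP \<Delta>\<in>I. ereal \<bar>\<Delta>\<bar>)"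
      unfolding idle_radius_def I_def less_max_iff_disj by blast
    then obtain y where "y \<in> I" "\<bar>\<Delta>\<bar> < \<bar>y\<bar>" by (auto simp: less_SUP_iff)
    then show ?thesis using idle_closed[of \<Delta> y] by (simp add: I_def greedy_action_def)
  qed
  have "q \<Delta> (greedy_action q \<Delta>) \<le> q \<Delta> u" if "u \<in> {0, 1}" for \<Delta> u
    using that by (auto simp: greedy_action_def)
  moreover have "greedy_action q \<Delta> \<in> {0, 1}" for \<Delta> by (simp add: greedy_action_def)
  moreover have "0 \<le> idle_radius q" unfolding idle_radius_def by (rule max.cobounded1)
  ultimately show ?thesis
    unfolding optimal_threshold_rule_def using above below by blast
qed

theorem corollary1:
  fixes a \<sigma> \<gamma> lam p01 p10 :: real and T :: nat
  assumes "\<sigma> > 0" and "\<gamma> > 0" and "lam > 0" and "T \<ge> 1"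
    and "0 \<le> p01" and "p01 \<le> 1" and "0 \<le> p10" and "p10 \<le> 1"
  shows "\<exists>(\<phi> :: nat \<Rightarrow> real \<Rightarrow> nat \<Rightarrow> nat) (thr :: nat \<Rightarrow> nat \<Rightarrow> ereal).
     \<forall>t\<in>{1..T}. \<forall>c\<in>{0,1}.
       0 \<le> thr t c \<and>
       (\<forall>\<Delta>::real.
          \<phi> t \<Delta> c \<in> {0,1} \<and>
          (\<forall>u\<in>{0,1}. Qfun a \<sigma> \<gamma> lam p01 p10 t \<Delta> c (\<phi> t \<Delta> c) \<le> Qfun a \<sigma> \<gamma> lam p01 p10 t \<Delta> c u) \<and>
          (ereal \<bar>\<Delta>\<bar> > thr t c \<longrightarrow> \<phi> t \<Delta> c = 1) \<and>
          (ereal \<bar>\<Delta>\<bar> < thr t c \<longrightarrow> \<phi> t \<Delta> c = 0))"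
proof -
  let ?q = "\<lambda>t c \<Delta>. Qfun a \<sigma> \<gamma> lam p01 p10 t \<Delta> c"
  have rule: "optimal_threshold_rule (?q t c) (greedy_action (?q t c)) (idle_radius (?q t c))"
    if c: "c \<in> {0, 1}" for t c
  proof (rule optimal_threshold_rule_greedy)
    fix x y :: real
    assume xy: "\<bar>x\<bar> \<le> \<bar>y\<bar>" and idle_y: "?q t c y 0 \<le> ?q t c y 1"
    have "\<gamma> \<ge> 0" "lam \<ge> 0" using \<open>\<gamma> > 0\<close> \<open>lam > 0\<close> by simp_all
    from xy idle_y show "?q t c x 0 \<le> ?q t c x 1"
      unfolding Qfun_def
      by (rule Qstep_idle_optimal_downward_closed[where W = "Vfun a \<sigma> \<gamma> lam p01 p10 (t - 1)",
            OF Vfun_abs_mono[OF \<open>\<gamma> \<ge> 0\<close>] \<open>\<gamma> \<ge> 0\<close> \<open>lam \<ge> 0\<close> c])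
  qed
  show ?thesis
    by (intro exI[of _ "\<lambda>t \<Delta> c. greedy_action (?q t c) \<Delta>"] exI[of _ "\<lambda>t c. idle_radius (?q t c)"] ballI)
      (rule rule[unfolded optimal_threshold_rule_def])
qed

end
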